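(* In the setting below, every chain $Z$ in $\tilde H$ is a simple path, i.e. no vertex of $H$ appears on $Z$ more than once.
   Context: Setting: $G$ is a graph; $S_1,T_1,S_2,T_2\subseteq V(G)$ are pairwise disjoint sets of $k$ vertices each, all of degree $1$ in $G$, with $(S_1,T_1)$ and $(S_2,T_2)$ each routable in $G$ (connected by $k$ node-disjoint paths). $H$ is an $(S_1,T_1,S_2,T_2)$-minimal minor of $G$: a minor of $G$ containing the vertices of $S_1\cup T_1\cup S_2\cup T_2$ as vertices (each with singleton branch set), in which both pairs are routable, and such that deleting or contracting any edge of $H$ destroys one of these properties. $\mathcal{R}$ (red paths) is a set of $k$ node-disjoint paths routing $(S_1,T_1)$ in $H$, and $\mathcal{B}$ (blue paths) is a set of $k$ node-disjoint paths routing $(S_2,T_2)$ in $H$. $\tilde H$ is the directed graph on $V(H)$ whose edges are the edges of red paths directed from $S_1$ toward $T_1$ (red edges) and the edges of blue paths directed from $S_2$ toward $T_2$ (blue edges). A chain is a directed (not necessarily simple) walk $e_1,e_2,\dots,e_r$ in $\tilde H$ whose edges alternate in color (all odd-indexed edges red and all even-indexed blue, or vice versa). *)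

theory Defs
  imports Main
begin

definition graph :: "'a set \<Rightarrow> 'a set set \<Rightarrow> bool" where
  "graph V E \<longleftrightarrow> finite V \<and> (\<forall>e\<in>E. card e = 2 \<and> e \<subseteq> V)"

definition degree :: "'a set set \<Rightarrow> 'a \<Rightarrow> nat" where
  "degree E v = card {e\<in>E. v \<in> e}"

definition walk :: "'a set \<Rightarrow> 'a set set \<Rightarrow> 'a list \<Rightarrow> bool" where
  "walk V E P \<longleftrightarrow> P \<noteq> [] \<and> set P \<subseteq> V \<and>
     (\<forall>i. Suc i < length P \<longrightarrow> {P ! i, P ! Suc i} \<in> E)"

definition path :: "'a set \<Rightarrow> 'a set set \<Rightarrow> 'a list \<Rightarrow> bool" where
  "path V E P \<longleftrightarrow> walk V E P \<and> distinct P"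

definition connected_set :: "'a set \<Rightarrow> 'a set set \<Rightarrow> 'a set \<Rightarrow> bool" where
  "connected_set V E X \<longleftrightarrow> (\<forall>x\<in>X. \<forall>y\<in>X. \<exists>P. path V E P \<and> set P \<subseteq> X \<and>
       hd P = x \<and> last P = y)"

text \<open>A routing of (S,T) in (V,E): a set of k pairwise node-disjoint paths,
  each going from a vertex of S to a vertex of T (the list order gives the
  direction from S towards T).\<close>
definition routing :: "'a set \<Rightarrow> 'a set set \<Rightarrow> 'a set \<Rightarrow> 'a set \<Rightarrow> nat \<Rightarrow> 'a list set \<Rightarrow> bool" where
  "routing V E S T k R \<longleftrightarrow> finite R \<and> card R = k \<and>
     (\<forall>P\<in>R. path V E P \<and> hd P \<in> S \<and> last P \<in> T) \<and>
     (\<forall>P\<in>R. \<forall>Q\<in>R. P \<noteq> Q \<longrightarrow> set P \<inter> set Q = {})"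

definition routable :: "'a set \<Rightarrow> 'a set set \<Rightarrow> 'a set \<Rightarrow> 'a set \<Rightarrow> nat \<Rightarrow> bool" where
  "routable V E S T k \<longleftrightarrow> (\<exists>R. routing V E S T k R)"

definition minor_model :: "'a set \<Rightarrow> 'a set set \<Rightarrow> 'a set \<Rightarrow> 'a set set \<Rightarrow> ('a \<Rightarrow> 'a set) \<Rightarrow> bool" where
  "minor_model VG EG VH EH \<beta> \<longleftrightarrow>
     (\<forall>v\<in>VH. \<beta> v \<noteq> {} \<and> \<beta> v \<subseteq> VG \<and> connected_set VG EG (\<beta> v)) \<and>
     (\<forall>u\<in>VH. \<forall>v\<in>VH. u \<noteq> v \<longrightarrow> \<beta> u \<inter> \<beta> v = {}) \<and>
     (\<forall>u v. {u, v} \<in> EH \<longrightarrow> (\<exists>x\<in>\<beta> u. \<exists>y\<in>\<beta> v. {x, y} \<in> EG))"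

text \<open>The properties that a (S1,T1,S2,T2)-minimal minor must have and that
  are destroyed by deleting or contracting any edge.\<close>
definition good_minor ::
  "'a set \<Rightarrow> 'a set set \<Rightarrow> 'a set \<Rightarrow> 'a set \<Rightarrow> 'a set \<Rightarrow> 'a set \<Rightarrow> nat \<Rightarrow>
   'a set \<Rightarrow> 'a set set \<Rightarrow> ('a \<Rightarrow> 'a set) \<Rightarrow> bool" where
  "good_minor VG EG S1 T1 S2 T2 k VH EH \<beta> \<longleftrightarrow>
     graph VH EH \<and> minor_model VG EG VH EH \<beta> \<and>
     (\<forall>t \<in> S1 \<union> T1 \<union> S2 \<union> T2. t \<in> VH \<and> \<beta> t = {t}) \<and>
     routable VH EH S1 T1 k \<and> routable VH EH S2 T2 k"

text \<open>Contraction of the edge {u,v}: v is merged into u (the merged vertex keeps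
  the name u and receives the union of both branch sets); loops are removed and
  parallel edges identified.\<close>
definition contract_V :: "'a set \<Rightarrow> 'a \<Rightarrow> 'a \<Rightarrow> 'a set" where
  "contract_V VH u v = VH - {v}"

definition contract_E :: "'a set set \<Rightarrow> 'a \<Rightarrow> 'a \<Rightarrow> 'a set set" where
  "contract_E EH u v = {e'. \<exists>e\<in>EH. e' = (\<lambda>x. if x = v then u else x) ` e \<and> card e' = 2}"

definition contract_branch :: "('a \<Rightarrow> 'a set) \<Rightarrow> 'a \<Rightarrow> 'a \<Rightarrow> ('a \<Rightarrow> 'a set)" where
  "contract_branch \<beta> u v = \<beta>(u := \<beta> u \<union> \<beta> v)"

definition minimal_minor ::
  "'a set \<Rightarrow> 'a set set \<Rightarrow> 'a set \<Rightarrow> 'a set \<Rightarrow> 'a set \<Rightarrow> 'a set \<Rightarrow> nat \<Rightarrow>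
   'a set \<Rightarrow> 'a set set \<Rightarrow> ('a \<Rightarrow> 'a set) \<Rightarrow> bool" where
  "minimal_minor VG EG S1 T1 S2 T2 k VH EH \<beta> \<longleftrightarrow>
     good_minor VG EG S1 T1 S2 T2 k VH EH \<beta> \<and>
     (\<forall>e\<in>EH. \<not> good_minor VG EG S1 T1 S2 T2 k VH (EH - {e}) \<beta>) \<and>
     (\<forall>u v. {u, v} \<in> EH \<longrightarrow>
        \<not> good_minor VG EG S1 T1 S2 T2 k (contract_V VH u v) (contract_E EH u v)
            (contract_branch \<beta> u v))"

text \<open>Coloured directed edges of H-tilde: red edges follow red paths, blue edges
  follow blue paths, each in list order.\<close>
definition dir_edge :: "'a list set \<Rightarrow> 'a \<Rightarrow> 'a \<Rightarrow> bool" where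
  "dir_edge R u v \<longleftrightarrow> (\<exists>P\<in>R. \<exists>i. Suc i < length P \<and> P ! i = u \<and> P ! Suc i = v)"

text \<open>A chain, given by the sequence of its vertices x0,...,xr (r \<ge> 1) and the
  colour c of the first edge (True = red): edge i (from x_i to x_(i+1)) has the
  colour c for even i and the other colour for odd i.\<close>
definition chain :: "'a list set \<Rightarrow> 'a list set \<Rightarrow> bool \<Rightarrow> 'a list \<Rightarrow> bool" where
  "chain R B c xs \<longleftrightarrow> length xs \<ge> 2 \<and>
     (\<forall>i. Suc i < length xs \<longrightarrow>
        (if (even i \<longleftrightarrow> c) then dir_edge R (xs ! i) (xs ! Suc i)
         else dir_edge B (xs ! i) (xs ! Suc i)))"

end

theory Submission
  imports Defs
begin

(* Suppose a chain repeats a vertex.  Two occurrences at minimal distance bound a closed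
   alternating walk y 0, ..., y L = y 0 without further repetitions (an alternating cycle).
   Its length L is at least 2, as H has no loops, and we refute both cases by exhibiting a
   smaller minor that still routes both pairs, contradicting minimality:

   - L = 2: a red edge a -> b is traversed backwards by a blue path.  Degree-1 terminals
     cannot lie on such a configuration, so contracting the edge {a,b} keeps both routings.
   - L >= 3: some red edge of the cycle is not a blue edge, hence (as blue paths have no
     directed cycle and cannot reverse red cycle edges) unused by the blue routing.  The red
     routing can be rerouted around the cycle, dropping its red edges and running its blue
     edges backwards; the result is a unit flow, hence a routing, avoiding that edge, which
     can therefore be deleted. *)

lemma path_iff_successively:
  "path V E P \<longleftrightarrow> P \<noteq> [] \<and> set P \<subseteq> V \<and> successively (\<lambda>x y. {x, y} \<in> E) P \<and> distinct P"
  unfolding path_def walk_def successively_conv_nth by auto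

lemma path_rev: "path V E (rev P) \<longleftrightarrow> path V E P"
  unfolding path_iff_successively by (simp add: insert_commute)

lemma path_append:
  assumes "path V E P" "path V E Q" "set P \<inter> set Q = {}" "{last P, hd Q} \<in> E"
  shows "path V E (P @ Q)"
  using assms unfolding path_iff_successively by (auto simp: successively_append_iff)

lemma routing_path: "routing V E S T k R \<Longrightarrow> P \<in> R \<Longrightarrow> path V E P"
  unfolding routing_def by blast

lemma routing_ends: "routing V E S T k R \<Longrightarrow> P \<in> R \<Longrightarrow> hd P \<in> S \<and> last P \<in> T"
  unfolding routing_def by blast

lemma routing_nonempty: "routing V E S T k R \<Longrightarrow> P \<in> R \<Longrightarrow> P \<noteq> []"
  unfolding routing_def path_def walk_def by blast

lemma routing_position_unique:
  assumes R: "routing V E S T k R" and "P \<in> R" "Q \<in> R"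
    and "i < length P" "j < length Q" "P ! i = Q ! j"
  shows "P = Q \<and> i = j"
proof -
  have "P = Q"
    using R assms(2-6) unfolding routing_def by (metis disjoint_iff nth_mem)
  moreover have "distinct P" using routing_path[OF R \<open>P \<in> R\<close>] unfolding path_def by blast
  ultimately show ?thesis using assms(4-6) nth_eq_iff_index_eq by blast
qed

text \<open>Choosing one vertex on each path of a routing is injective, as the paths are
  disjoint; so if the chosen vertices lie in a k-element set, each element is chosen.\<close>
lemma routing_endpoint_image:
  assumes R: "routing V E S T k R" and f: "\<And>P. P \<in> R \<Longrightarrow> P \<noteq> [] \<Longrightarrow> f P \<in> set P"
    and into: "f ` R \<subseteq> X" and X: "finite X" "card X = k"
  shows "f ` R = X"
proof -
  have "inj_on f R"
    using routing_position_unique[OF R] routing_nonempty[OF R] f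
    by (intro inj_onI) (metis in_set_conv_nth)
  hence "card (f ` R) = k" using R unfolding routing_def by (simp add: card_image)
  thus ?thesis using into X by (metis card_subset_eq)
qed

lemma routing_sources:
  "routing V E S T k R \<Longrightarrow> finite S \<Longrightarrow> card S = k \<Longrightarrow> hd ` R = S"
  by (rule routing_endpoint_image) (auto simp: routing_def)

lemma routing_sinks:
  "routing V E S T k R \<Longrightarrow> finite T \<Longrightarrow> card T = k \<Longrightarrow> last ` R = T"
  by (rule routing_endpoint_image) (auto simp: routing_def)

lemma dir_edge_edge:
  assumes R: "routing V E S T k R" and "dir_edge R a b"
  shows "{a, b} \<in> E \<and> a \<in> V \<and> b \<in> V \<and> a \<noteq> b"
proof -
  obtain P i where P: "P \<in> R" "Suc i < length P" "P ! i = a" "P ! Suc i = b"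
    using assms(2) unfolding dir_edge_def by blast
  have "path V E P" using routing_path[OF R P(1)] .
  thus ?thesis using P unfolding path_def walk_def
    by (auto dest: nth_mem simp: nth_eq_iff_index_eq)
qed

text \<open>Since the paths of a routing are disjoint and simple, every vertex has at most
  one outgoing and at most one incoming directed edge, and no two vertices are joined
  in both directions.\<close>
lemma dir_edge_succ_unique:
  "routing V E S T k R \<Longrightarrow> dir_edge R a b \<Longrightarrow> dir_edge R a b' \<Longrightarrow> b = b'"
  unfolding dir_edge_def by (metis Suc_lessD routing_position_unique)

lemma dir_edge_pred_unique:
  "routing V E S T k R \<Longrightarrow> dir_edge R a b \<Longrightarrow> dir_edge R a' b \<Longrightarrow> a = a'"
  unfolding dir_edge_def by (metis Suc_inject routing_position_unique)

lemma dir_edge_antisym: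
  assumes R: "routing V E S T k R" and "dir_edge R a b" "dir_edge R b a"
  shows False
proof -
  obtain P i where P: "P \<in> R" "Suc i < length P" "P ! i = a" "P ! Suc i = b"
    using assms(2) unfolding dir_edge_def by blast
  obtain Q j where Q: "Q \<in> R" "Suc j < length Q" "Q ! j = b" "Q ! Suc j = a"
    using assms(3) unfolding dir_edge_def by blast
  have "i = Suc j" "Suc i = j"
    using routing_position_unique[OF R P(1) Q(1), of i "Suc j"]
      routing_position_unique[OF R P(1) Q(1), of "Suc i" j] P Q by auto
  thus False by simp
qed

lemma dir_edge_walk_on_path:
  assumes R: "routing V E S T k R" and "n > 0"
    and walk: "\<And>t. t < n \<Longrightarrow> dir_edge R (y t) (y (Suc t))"
  shows "\<exists>P\<in>R. \<exists>i. i + n < length P \<and> (\<forall>t\<le>n. y t = P ! (i + t))"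
proof -
  obtain P i where P: "P \<in> R" "Suc i < length P" "P ! i = y 0"
    using walk[of 0] \<open>n > 0\<close> unfolding dir_edge_def by blast
  have "i + t < length P \<and> y t = P ! (i + t)" if "t \<le> n" for t
    using that
  proof (induction t)
    case 0 thus ?case using P by simp
  next
    case (Suc t)
    then obtain Q j where Q: "Q \<in> R" "Suc j < length Q" "Q ! j = y t" "Q ! Suc j = y (Suc t)"
      using walk[of t] unfolding dir_edge_def by auto
    have "Q = P \<and> j = i + t"
      using routing_position_unique[OF R Q(1) P(1), of j "i + t"] Suc Q by (simp add: Suc_lessD)
    thus ?case using Q by simp
  qed
  thus ?thesis using P(1) by blast
qed

lemma dir_edge_acyclic:
  assumes R: "routing V E S T k R" and "n > 0"
    and walk: "\<And>t. t < n \<Longrightarrow> dir_edge R (y t) (y (Suc t))" and closed: "y n = y 0"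
  shows False
proof -
  obtain P i where P: "P \<in> R" "i + n < length P" "\<forall>t\<le>n. y t = P ! (i + t)"
    using dir_edge_walk_on_path[OF R \<open>n > 0\<close>] walk by blast
  have "P ! (i + n) = P ! (i + 0)" using P(3) closed by (metis le0 order_refl)
  hence "i + n = i + 0"
    using routing_position_unique[OF R P(1) P(1), of "i + n" "i + 0"] P(2) by simp
  thus False using \<open>n > 0\<close> by simp
qed

lemma source_no_pred:
  assumes R: "routing V E S T k R" "finite S" "card S = k" and "s \<in> S" "dir_edge R w s"
  shows False
proof -
  obtain Q where Q: "Q \<in> R" "hd Q = s" using routing_sources[OF R] \<open>s \<in> S\<close> by force
  obtain P i where P: "P \<in> R" "Suc i < length P" "P ! Suc i = s"
    using assms(5) unfolding dir_edge_def by blast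
  have "Q ! 0 = s" "0 < length Q" using Q routing_nonempty[OF R(1) Q(1)] by (auto simp: hd_conv_nth)
  thus False using routing_position_unique[OF R(1) P(1) Q(1), of "Suc i" 0] P by simp
qed

lemma sink_no_succ:
  assumes R: "routing V E S T k R" "finite T" "card T = k" and "t \<in> T" "dir_edge R t z"
  shows False
proof -
  obtain Q where Q: "Q \<in> R" "last Q = t" using routing_sinks[OF R] \<open>t \<in> T\<close> by force
  obtain P i where P: "P \<in> R" "Suc i < length P" "P ! i = t"
    using assms(5) unfolding dir_edge_def by blast
  have "Q ! (length Q - 1) = t" "length Q - 1 < length Q"
    using Q routing_nonempty[OF R(1) Q(1)] by (auto simp: last_conv_nth)
  hence "P = Q \<and> i = length Q - 1"
    using routing_position_unique[OF R(1) P(1) Q(1), of i "length Q - 1"] P by simp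
  thus False using P(2) by simp
qed

lemma source_succ:
  assumes R: "routing V E S T k R" "finite S" "card S = k" and "S \<inter> T = {}" "s \<in> S"
  shows "\<exists>z. dir_edge R s z"
proof -
  obtain Q where Q: "Q \<in> R" "hd Q = s" using routing_sources[OF R] \<open>s \<in> S\<close> by force
  have "Q \<noteq> []" "last Q \<noteq> s" using routing_nonempty[OF R(1) Q(1)] routing_ends[OF R(1) Q(1)]
      assms(4,5) by auto
  hence "Suc 0 < length Q" using Q by (cases Q) auto
  thus ?thesis using Q \<open>Q \<noteq> []\<close> unfolding dir_edge_def by (metis hd_conv_nth)
qed

lemma inner_succ:
  assumes R: "routing V E S T k R" and "dir_edge R w v" "v \<notin> T"
  shows "\<exists>z. dir_edge R v z"
proof -
  obtain P i where P: "P \<in> R" "Suc i < length P" "P ! Suc i = v"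
    using assms(2) unfolding dir_edge_def by blast
  have "last P \<noteq> v" using routing_ends[OF R P(1)] assms(3) by auto
  hence "Suc (Suc i) < length P" using P by (metis Suc_lessI diff_Suc_1 last_conv_nth list.size(3) not_less0)
  thus ?thesis using P unfolding dir_edge_def by blast
qed

lemma inner_pred:
  assumes R: "routing V E S T k R" and "dir_edge R v w" "v \<notin> S"
  shows "\<exists>z. dir_edge R z v"
proof -
  obtain P i where P: "P \<in> R" "Suc i < length P" "P ! i = v"
    using assms(2) unfolding dir_edge_def by blast
  have "hd P \<noteq> v" using routing_ends[OF R P(1)] assms(3) by auto
  moreover have "hd P = P ! 0" using P(2) by (cases P) auto
  ultimately obtain j where "i = Suc j" using P(3) by (cases i) auto
  thus ?thesis using P unfolding dir_edge_def by (metis Suc_lessD)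
qed

section \<open>Unit flows yield routings\<close>

text \<open>Following
  the flow from each source traces out a routing of (S,T).\<close>
locale unit_flow =
  fixes V :: "'a set" and E :: "'a set set" and S T :: "'a set" and N :: "'a \<Rightarrow> 'a \<Rightarrow> bool"
  assumes finite_V: "finite V"
    and flow_edge: "N a b \<Longrightarrow> a \<in> V \<and> b \<in> V \<and> {a, b} \<in> E"
    and succ_unique: "N a b \<Longrightarrow> N a b' \<Longrightarrow> b = b'"
    and pred_unique: "N a b \<Longrightarrow> N a' b \<Longrightarrow> a = a'"
    and source_out: "s \<in> S \<Longrightarrow> \<exists>b. N s b"
    and source_no_in: "s \<in> S \<Longrightarrow> \<not> N a s"
    and sink_no_out: "t \<in> T \<Longrightarrow> \<not> N t b"
    and conservation: "N a v \<Longrightarrow> (\<exists>b. N v b) \<or> v \<in> T"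
begin

definition succ :: "'a \<Rightarrow> 'a" where
  "succ x = (THE y. N x y)"

definition trail :: "'a \<Rightarrow> nat \<Rightarrow> 'a" where
  "trail x n = (succ ^^ n) x"

definition proceeds :: "'a \<Rightarrow> nat \<Rightarrow> bool" where
  "proceeds x n \<longleftrightarrow> (\<forall>i<n. \<exists>b. N (trail x i) b)"

lemma succ_eq: "N x y \<Longrightarrow> succ x = y"
  unfolding succ_def using succ_unique by blast

lemma trail_0 [simp]: "trail x 0 = x"
  by (simp add: trail_def)

lemma trail_Suc: "trail x (Suc n) = succ (trail x n)"
  by (simp add: trail_def)

lemma proceeds_mono: "proceeds x n \<Longrightarrow> i \<le> n \<Longrightarrow> proceeds x i"
  unfolding proceeds_def by auto

lemma trail_step:
  assumes "proceeds x n" "i < n"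
  shows "N (trail x i) (trail x (Suc i))"
proof -
  obtain b where "N (trail x i) b" using assms unfolding proceeds_def by blast
  thus ?thesis by (simp add: trail_Suc succ_eq)
qed

lemma trail_in_V:
  assumes "s \<in> S" "proceeds s n"
  shows "trail s n \<in> V"
proof (cases n)
  case 0 thus ?thesis using source_out[OF assms(1)] flow_edge by auto
next
  case (Suc m) thus ?thesis using trail_step[OF assms(2), of m] flow_edge by auto
qed

text \<open>Flow can be traced backwards uniquely: if two trails meet, the shorter one is a
  final segment of the longer one.\<close>
lemma trail_backwards:
  "proceeds x i \<Longrightarrow> proceeds x' j \<Longrightarrow> i \<le> j \<Longrightarrow> trail x i = trail x' j \<Longrightarrow> x = trail x' (j - i)"
proof (induction i arbitrary: j)
  case 0 thus ?case by simp
next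
  case (Suc i)
  then obtain j' where j: "j = Suc j'" by (cases j) auto
  have step: "N (trail x i) (trail x (Suc i))" "N (trail x' j') (trail x' j)"
    using trail_step[OF Suc.prems(1), of i] trail_step[OF Suc.prems(2), of j'] j by auto
  have "trail x i = trail x' j'" using pred_unique[OF step(1)] step(2) Suc.prems(4) by simp
  thus ?case using Suc.IH[of j'] Suc.prems proceeds_mono j by simp
qed

text \<open>Since sources receive no flow, trails from sources never meet except trivially.\<close>
lemma trails_meet:
  assumes "s \<in> S" "s' \<in> S" "proceeds s i" "proceeds s' j" "trail s i = trail s' j"
  shows "i = j \<and> s = s'"
proof -
  have meet: "i = j \<and> s = s'"
    if "s \<in> S" "proceeds s i" "proceeds s' j" "trail s i = trail s' j" "i \<le> j" for s s' i j
  proof -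
    have s: "s = trail s' (j - i)" using trail_backwards[OF that(2,3,5,4)] .
    show ?thesis
    proof (cases "i = j")
      case False
      then obtain d where d: "j - i = Suc d" "d < j" using \<open>i \<le> j\<close> by (cases "j - i") auto
      have "N (trail s' d) s" using trail_step[OF that(3) d(2)] s d(1) by simp
      thus ?thesis using source_no_in \<open>s \<in> S\<close> by blast
    qed (use s in simp)
  qed
  show ?thesis
  proof (cases "i \<le> j")
    case True thus ?thesis using meet assms by blast
  next
    case False thus ?thesis using meet[of s' j s i] assms by simp
  qed
qed

text \<open>By finiteness every trail from a source eventually stops.\<close>
lemma trail_stops: "s \<in> S \<Longrightarrow> \<exists>m. \<not> (\<exists>b. N (trail s m) b)"
proof (rule ccontr)
  assume s: "s \<in> S" and "\<not> (\<exists>m. \<not> (\<exists>b. N (trail s m) b))"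
  hence forever: "proceeds s n" for n unfolding proceeds_def by blast
  have "inj (trail s)" by (rule injI) (use trails_meet[OF s s forever forever] in blast)
  moreover have "finite (range (trail s))"
    using trail_in_V[OF s forever] finite_V by (blast intro: finite_subset)
  ultimately show False using finite_imageD infinite_UNIV_nat by blast
qed

definition stop :: "'a \<Rightarrow> nat" where
  "stop s = (LEAST m. \<not> (\<exists>b. N (trail s m) b))"

definition flow_path :: "'a \<Rightarrow> 'a list" where
  "flow_path s = map (trail s) [0..<Suc (stop s)]"

lemma stop_no_out:
  assumes "s \<in> S"
  shows "\<not> (\<exists>b. N (trail s (stop s)) b)"
proof -
  obtain m where "\<not> (\<exists>b. N (trail s m) b)" using trail_stops[OF assms] by blast
  thus ?thesis unfolding stop_def by (rule LeastI)
qed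

lemma proceeds_stop: "proceeds s (stop s)"
  unfolding proceeds_def stop_def using not_less_Least by blast

lemma stop_pos: "s \<in> S \<Longrightarrow> stop s > 0"
  using stop_no_out[of s] source_out[of s] by (cases "stop s") auto

lemma set_flow_path: "set (flow_path s) = trail s ` {..stop s}"
  unfolding flow_path_def by (auto simp del: upt_Suc)

lemma flow_path_path:
  assumes s: "s \<in> S"
  shows "path V E (flow_path s) \<and> hd (flow_path s) = s \<and> last (flow_path s) \<in> T"
proof -
  let ?P = "flow_path s"
  have len: "length ?P = Suc (stop s)" and nth: "i < length ?P \<Longrightarrow> ?P ! i = trail s i" for i
    unfolding flow_path_def by (simp_all del: upt_Suc)
  have "set ?P \<subseteq> V"
  proof
    fix x assume "x \<in> set ?P"
    then obtain i where "i \<le> stop s" "x = trail s i" unfolding set_flow_path by blast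
    thus "x \<in> V" using trail_in_V[OF s proceeds_mono[OF proceeds_stop]] by blast
  qed
  moreover have "\<forall>i. Suc i < length ?P \<longrightarrow> {?P ! i, ?P ! Suc i} \<in> E"
  proof (intro allI impI)
    fix i assume i: "Suc i < length ?P"
    hence "N (?P ! i) (?P ! Suc i)" using trail_step[OF proceeds_stop[of s], of i] nth len by simp
    thus "{?P ! i, ?P ! Suc i} \<in> E" using flow_edge by blast
  qed
  moreover have "distinct ?P"
    unfolding distinct_conv_nth
  proof (intro allI impI)
    fix i j assume ij: "i < length ?P" "j < length ?P" "i \<noteq> j"
    have "proceeds s i" "proceeds s j"
      using proceeds_mono[OF proceeds_stop[of s], of i] proceeds_mono[OF proceeds_stop[of s], of j] ij len
      by simp_all
    thus "?P ! i \<noteq> ?P ! j" using ij nth trails_meet[OF s s] by auto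
  qed
  moreover have "?P \<noteq> []" using len by auto
  moreover have "hd ?P = s" using nth len \<open>?P \<noteq> []\<close> by (simp add: hd_conv_nth)
  moreover have "last ?P \<in> T"
  proof -
    obtain d where d: "stop s = Suc d" using stop_pos[OF s] by (cases "stop s") auto
    have "N (trail s d) (trail s (stop s))" using trail_step[OF proceeds_stop] d by simp
    moreover have "last ?P = trail s (stop s)"
      using nth len \<open>?P \<noteq> []\<close> by (simp add: last_conv_nth)
    ultimately show ?thesis using conservation stop_no_out[OF s] by auto
  qed
  ultimately show ?thesis unfolding path_def walk_def by blast
qed

theorem routable: "finite S \<Longrightarrow> routable V E S T (card S)"
proof -
  assume "finite S"
  have disj: "s = s'"
    if ss': "s \<in> S" "s' \<in> S" and x: "x \<in> set (flow_path s)" "x \<in> set (flow_path s')" for s s' x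
  proof -
    obtain i j where ij: "i \<le> stop s" "j \<le> stop s'" "trail s i = trail s' j"
      using x unfolding set_flow_path by auto
    have "proceeds s i" "proceeds s' j"
      using proceeds_mono[OF proceeds_stop[of s] ij(1)] proceeds_mono[OF proceeds_stop[of s'] ij(2)] .
    thus ?thesis using trails_meet[OF ss' _ _ ij(3)] by simp
  qed
  have "inj_on flow_path S"
  proof (rule inj_onI)
    fix s s' assume ss': "s \<in> S" "s' \<in> S" and eq: "flow_path s = flow_path s'"
    have "s = hd (flow_path s)" "s' = hd (flow_path s')"
      using flow_path_path[OF ss'(1)] flow_path_path[OF ss'(2)] by simp_all
    thus "s = s'" using eq by simp
  qed
  hence "card (flow_path ` S) = card S" by (rule card_image)
  moreover have "set P \<inter> set Q = {}"
    if PQ: "P \<in> flow_path ` S" "Q \<in> flow_path ` S" "P \<noteq> Q" for P Q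
  proof -
    obtain s s' where "s \<in> S" "s' \<in> S" "P = flow_path s" "Q = flow_path s'" "s \<noteq> s'"
      using PQ by blast
    thus ?thesis using disj[of s s'] by blast
  qed
  moreover have "path V E P \<and> hd P \<in> S \<and> last P \<in> T" if "P \<in> flow_path ` S" for P
    using that flow_path_path by auto
  ultimately have "routing V E S T (card S) (flow_path ` S)"
    unfolding routing_def using \<open>finite S\<close> by blast
  thus ?thesis unfolding routable_def by blast
qed

end

section \<open>Alternating cycles\<close>

definition alternating_cycle :: "'a list set \<Rightarrow> 'a list set \<Rightarrow> nat \<Rightarrow> (nat \<Rightarrow> 'a) \<Rightarrow> bool" where
  "alternating_cycle R B L y \<longleftrightarrow> 2 \<le> L \<and> y L = y 0 \<and> inj_on y {..<L} \<and>
     (\<forall>t<L. if even t then dir_edge R (y t) (y (Suc t)) else dir_edge B (y t) (y (Suc t)))"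

section \<open>Deleting an edge of a minimal minor\<close>

lemma good_minor_delete:
  assumes "good_minor VG EG S1 T1 S2 T2 k VH EH \<beta>"
    and "routable VH (EH - {e}) S1 T1 k" "routable VH (EH - {e}) S2 T2 k"
  shows "good_minor VG EG S1 T1 S2 T2 k VH (EH - {e}) \<beta>"
  using assms unfolding good_minor_def graph_def minor_model_def by auto

lemma routing_delete:
  assumes R: "routing V E S T k R" and unused: "\<And>a b. dir_edge R a b \<Longrightarrow> {a, b} \<noteq> e"
  shows "routing V (E - {e}) S T k R"
proof -
  have "path V (E - {e}) P" if "P \<in> R" for P
    using routing_path[OF R that] unused that unfolding path_def walk_def dir_edge_def by blast
  thus ?thesis using R unfolding routing_def by blast
qed

text \<open>Rerouting the red paths along an alternating cycle of length at least 3: the red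
  edges of the cycle are dropped and the blue edges of the cycle are traversed backwards.\<close>
locale rerouting =
  fixes V :: "'a set" and E :: "'a set set" and S1 T1 S2 T2 :: "'a set" and k :: nat
    and R B :: "'a list set" and L :: nat and y :: "nat \<Rightarrow> 'a"
  assumes finite_V: "finite V"
    and red: "routing V E S1 T1 k R" and blue: "routing V E S2 T2 k B"
    and sources: "finite S1" "card S1 = k" and sinks: "finite T1" "card T1 = k"
    and disjoint: "S1 \<inter> T1 = {}"
    and cycle: "alternating_cycle R B L y" and long: "3 \<le> L"
begin

lemma closed: "y L = y 0"
  and cycle_inj: "t < L \<Longrightarrow> t' < L \<Longrightarrow> y t = y t' \<Longrightarrow> t = t'"
  and red_step: "t < L \<Longrightarrow> even t \<Longrightarrow> dir_edge R (y t) (y (Suc t))"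
  and blue_step: "t < L \<Longrightarrow> odd t \<Longrightarrow> dir_edge B (y t) (y (Suc t))"
  using cycle unfolding alternating_cycle_def inj_on_def by auto

text \<open>Positions on the cycle are taken modulo L.\<close>
lemma y_Suc_mod: "t < L \<Longrightarrow> y (Suc t) = y (Suc t mod L) \<and> Suc t mod L < L"
  using closed long by (cases "Suc t = L") auto

lemma blue_not_reverse_red:
  assumes t: "t < L" "even t" and rev: "dir_edge B (y (Suc t)) (y t)"
  shows False
proof (cases "Suc t < L")
  case True
  hence "dir_edge B (y (Suc t)) (y (Suc (Suc t)))" using blue_step t by simp
  hence "y t = y (Suc (Suc t) mod L)"
    using dir_edge_succ_unique[OF blue rev] y_Suc_mod[of "Suc t"] True by simp
  hence "t = Suc (Suc t) mod L" using cycle_inj y_Suc_mod[of "Suc t"] t True by simp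
  thus False using long True by (cases "Suc (Suc t) = L") auto
next
  case False
  hence tL: "Suc t = L" using t by simp
  then obtain d where d: "t = Suc d" "odd d" using long t by (cases t) auto
  have "dir_edge B (y d) (y t)" using blue_step[of d] d t by simp
  moreover have "dir_edge B (y 0) (y t)" using rev tL closed by simp
  ultimately have "y d = y 0" by (rule dir_edge_pred_unique[OF blue])
  hence "d = 0" using cycle_inj[of d 0] d t long by simp
  thus False using d by simp
qed

text \<open>Not every red edge of the cycle is also blue, since the blue paths have no directed cycle.\<close>
lemma red_edge_not_blue: "\<exists>t0<L. even t0 \<and> \<not> dir_edge B (y t0) (y (Suc t0))"
proof (rule ccontr)
  assume "\<not> ?thesis"
  hence "\<And>t. t < L \<Longrightarrow> dir_edge B (y t) (y (Suc t))" using blue_step by blast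
  thus False using dir_edge_acyclic[OF blue, of L y] long closed by simp
qed

lemma blue_avoids:
  assumes t0: "t0 < L" "even t0" "\<not> dir_edge B (y t0) (y (Suc t0))" and ab: "dir_edge B a b"
  shows "{a, b} \<noteq> {y t0, y (Suc t0)}"
  using ab t0 blue_not_reverse_red[OF t0(1,2)] by (auto simp: doubleton_eq_iff)

definition cycle_red :: "'a \<Rightarrow> 'a \<Rightarrow> bool" where
  "cycle_red a b \<longleftrightarrow> (\<exists>t<L. even t \<and> a = y t \<and> b = y (Suc t))"

definition cycle_blue_reversed :: "'a \<Rightarrow> 'a \<Rightarrow> bool" where
  "cycle_blue_reversed a b \<longleftrightarrow> (\<exists>t<L. odd t \<and> a = y (Suc t) \<and> b = y t)"

definition rerouted :: "'a \<Rightarrow> 'a \<Rightarrow> bool" where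
  "rerouted a b \<longleftrightarrow> (dir_edge R a b \<and> \<not> cycle_red a b) \<or> cycle_blue_reversed a b"

lemma cycle_red_dir_edge: "cycle_red a b \<Longrightarrow> dir_edge R a b"
  unfolding cycle_red_def using red_step by blast

text \<open>Around the cycle, every reversed blue edge is preceded and followed by a dropped
  red edge, and every dropped red edge is preceded by a reversed blue edge or by another
  dropped red edge (the latter only at position 0 when L is odd).\<close>
lemma reversed_start_red: "cycle_blue_reversed a b \<Longrightarrow> \<exists>z. cycle_red a z"
proof -
  assume "cycle_blue_reversed a b"
  then obtain t where t: "t < L" "odd t" "a = y (Suc t)" unfolding cycle_blue_reversed_def by blast
  have "even (Suc t mod L)" using t by (cases "Suc t = L") auto
  thus ?thesis using y_Suc_mod[OF t(1)] t(3) unfolding cycle_red_def by blast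
qed

lemma reversed_end_red: "cycle_blue_reversed a b \<Longrightarrow> \<exists>w. cycle_red w b"
proof -
  assume "cycle_blue_reversed a b"
  then obtain t where t: "t < L" "odd t" "b = y t" unfolding cycle_blue_reversed_def by blast
  then obtain d where "t = Suc d" by (cases t) auto
  hence "cycle_red (y d) b" using t unfolding cycle_red_def by (intro exI[of _ d]) auto
  thus ?thesis by blast
qed

lemma cycle_red_start:
  assumes "cycle_red v z"
  shows "(\<exists>b. cycle_blue_reversed v b) \<or> (\<exists>w. cycle_red w v)"
proof -
  obtain t where t: "t < L" "even t" "v = y t" using assms unfolding cycle_red_def by blast
  show ?thesis
  proof (cases t)
    case (Suc d)
    hence "cycle_blue_reversed v (y d)"
      using t unfolding cycle_blue_reversed_def by (intro exI[of _ d]) auto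
    thus ?thesis by blast
  next
    case 0
    obtain d where d: "L = Suc d" using long by (cases L) auto
    show ?thesis
    proof (cases "odd d")
      case True
      hence "cycle_blue_reversed v (y d)" using t 0 d closed unfolding cycle_blue_reversed_def by auto
      thus ?thesis by blast
    next
      case False
      hence "cycle_red (y d) v" using t 0 d closed unfolding cycle_red_def by auto
      thus ?thesis by blast
    qed
  qed
qed

lemma reversed_succ_unique:
  assumes "cycle_blue_reversed a b" "cycle_blue_reversed a b'"
  shows "b = b'"
proof -
  obtain t where t: "t < L" "odd t" "a = y (Suc t)" "b = y t"
    using assms(1) unfolding cycle_blue_reversed_def by blast
  obtain t' where t': "t' < L" "odd t'" "a = y (Suc t')" "b' = y t'"
    using assms(2) unfolding cycle_blue_reversed_def by blast
  have "Suc t mod L = Suc t' mod L"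
    using cycle_inj y_Suc_mod[OF t(1)] y_Suc_mod[OF t'(1)] t(3) t'(3) by metis
  hence "t = t'" using t(1) t'(1) by (cases "Suc t = L"; cases "Suc t' = L") auto
  thus ?thesis using t t' by simp
qed

lemma reversed_pred_unique:
  "cycle_blue_reversed a b \<Longrightarrow> cycle_blue_reversed a' b \<Longrightarrow> a = a'"
  unfolding cycle_blue_reversed_def using cycle_inj by metis

lemma rerouted_edge:
  assumes t0: "t0 < L" "even t0" "\<not> dir_edge B (y t0) (y (Suc t0))" and ab: "rerouted a b"
  shows "a \<in> V \<and> b \<in> V \<and> {a, b} \<in> E - {{y t0, y (Suc t0)}}"
proof (cases "cycle_blue_reversed a b")
  case True
  hence ba: "dir_edge B b a" unfolding cycle_blue_reversed_def using blue_step by blast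
  have "{b, a} \<noteq> {y t0, y (Suc t0)}" using blue_avoids[OF t0 ba] .
  thus ?thesis using dir_edge_edge[OF blue ba] by (auto simp: insert_commute)
next
  case False
  hence kept: "dir_edge R a b" "\<not> cycle_red a b" using ab unfolding rerouted_def by auto
  have "\<not> (a = y t0 \<and> b = y (Suc t0))" using kept(2) t0 unfolding cycle_red_def by blast
  moreover have "\<not> (a = y (Suc t0) \<and> b = y t0)"
    using dir_edge_antisym[OF red kept(1)] red_step[OF t0(1,2)] by blast
  ultimately show ?thesis using dir_edge_edge[OF red kept(1)] by (auto simp: doubleton_eq_iff)
qed

lemma rerouted_conservation:
  assumes av: "rerouted a v"
  shows "(\<exists>b. rerouted v b) \<or> v \<in> T1"
proof (rule disjCI)
  assume v: "v \<notin> T1"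
  show "\<exists>b. rerouted v b"
  proof (cases "cycle_blue_reversed a v")
    case True
    then obtain t where t: "t < L" "odd t" "v = y t" unfolding cycle_blue_reversed_def by blast
    obtain w where "cycle_red w v" using reversed_end_red[OF True] by blast
    then obtain z where z: "dir_edge R v z" using inner_succ[OF red _ v] cycle_red_dir_edge by blast
    have "\<not> cycle_red v z"
      using t cycle_inj unfolding cycle_red_def by (metis less_Suc_eq)
    thus ?thesis using z unfolding rerouted_def by blast
  next
    case False
    hence kept: "dir_edge R a v" "\<not> cycle_red a v" using av unfolding rerouted_def by auto
    obtain z where z: "dir_edge R v z" using inner_succ[OF red kept(1) v] by blast
    have "\<not> cycle_red w v" if "\<not> cycle_red a v" for w
      using that kept(1) cycle_red_dir_edge dir_edge_pred_unique[OF red] by blast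
    thus ?thesis using z cycle_red_start[of v z] kept(2) unfolding rerouted_def by blast
  qed
qed

lemma rerouted_unit_flow:
  assumes t0: "t0 < L" "even t0" "\<not> dir_edge B (y t0) (y (Suc t0))"
  shows "unit_flow V (E - {{y t0, y (Suc t0)}}) S1 T1 rerouted"
proof
  show "finite V" by (rule finite_V)
next
  fix a b assume "rerouted a b"
  thus "a \<in> V \<and> b \<in> V \<and> {a, b} \<in> E - {{y t0, y (Suc t0)}}" by (rule rerouted_edge[OF t0])
next
  fix a b b' assume "rerouted a b" "rerouted a b'"
  thus "b = b'"
    unfolding rerouted_def
    using dir_edge_succ_unique[OF red] reversed_succ_unique reversed_start_red cycle_red_dir_edge
    by metis
next
  fix a a' b assume "rerouted a b" "rerouted a' b"
  thus "a = a'"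
    unfolding rerouted_def
    using dir_edge_pred_unique[OF red] reversed_pred_unique reversed_end_red cycle_red_dir_edge
    by metis
next
  fix s assume s: "s \<in> S1"
  obtain z where z: "dir_edge R s z" using source_succ[OF red sources disjoint s] by blast
  show "\<exists>b. rerouted s b"
    using z cycle_red_start[of s z] source_no_pred[OF red sources s] cycle_red_dir_edge
    unfolding rerouted_def by blast
next
  fix s a assume s: "s \<in> S1"
  show "\<not> rerouted a s"
    using source_no_pred[OF red sources s] reversed_end_red cycle_red_dir_edge
    unfolding rerouted_def by blast
next
  fix t b assume t: "t \<in> T1"
  show "\<not> rerouted t b"
    using sink_no_succ[OF red sinks t] reversed_start_red cycle_red_dir_edge
    unfolding rerouted_def by blast
next
  fix a v assume "rerouted a v"
  thus "(\<exists>b. rerouted v b) \<or> v \<in> T1" by (rule rerouted_conservation)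
qed

end

lemma long_alternating_cycle_impossible:
  assumes mm: "minimal_minor VG EG S1 T1 S2 T2 k VH EH \<beta>"
    and R: "routing VH EH S1 T1 k R" and B: "routing VH EH S2 T2 k B"
    and sources: "finite S1" "card S1 = k" and sinks: "finite T1" "card T1 = k"
    and disjoint: "S1 \<inter> T1 = {}"
    and cycle: "alternating_cycle R B L y" and long: "3 \<le> L"
  shows False
proof -
  have gm: "good_minor VG EG S1 T1 S2 T2 k VH EH \<beta>" using mm unfolding minimal_minor_def by blast
  hence "finite VH" unfolding good_minor_def graph_def by blast
  then interpret rerouting VH EH S1 T1 S2 T2 k R B L y
    using R B sources sinks disjoint cycle long by unfold_locales
  obtain t0 where t0: "t0 < L" "even t0" "\<not> dir_edge B (y t0) (y (Suc t0))"
    using red_edge_not_blue by blast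
  let ?e = "{y t0, y (Suc t0)}"
  have "?e \<in> EH" using dir_edge_edge[OF R red_step[OF t0(1,2)]] by blast
  moreover have "routable VH (EH - {?e}) S1 T1 k"
    using unit_flow.routable[OF rerouted_unit_flow[OF t0] sources(1)] sources(2) by simp
  moreover have "routable VH (EH - {?e}) S2 T2 k"
    using routing_delete[OF B blue_avoids[OF t0]] unfolding routable_def by blast
  ultimately show False
    using good_minor_delete[OF gm] mm unfolding minimal_minor_def by blast
qed

section \<open>Contracting an edge of a minimal minor\<close>

lemma contract_edge_keep:
  "graph VH EH \<Longrightarrow> {c, d} \<in> EH \<Longrightarrow> c \<noteq> b \<Longrightarrow> d \<noteq> b \<Longrightarrow> {c, d} \<in> contract_E EH a b"
  unfolding contract_E_def graph_def by (rule CollectI, rule bexI[of _ "{c, d}"]) auto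

lemma contract_edge_move:
  "graph VH EH \<Longrightarrow> {c, b} \<in> EH \<Longrightarrow> c \<noteq> a \<Longrightarrow> c \<noteq> b \<Longrightarrow> {c, a} \<in> contract_E EH a b"
  unfolding contract_E_def graph_def by (rule CollectI, rule bexI[of _ "{c, b}"]) auto

lemma contract_keeps_walk:
  assumes g: "graph VH EH" and "successively (\<lambda>x y. {x, y} \<in> EH) P" "b \<notin> set P"
  shows "successively (\<lambda>x y. {x, y} \<in> contract_E EH a b) P"
  by (rule successively_mono[OF assms(2)]) (metis contract_edge_keep[OF g] assms(3))

lemma contract_keeps_path:
  "graph VH EH \<Longrightarrow> path VH EH P \<Longrightarrow> b \<notin> set P \<Longrightarrow> path (VH - {b}) (contract_E EH a b) P"
  unfolding path_iff_successively using contract_keeps_walk[of VH EH P b a] by auto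

lemma contract_path_through:
  assumes g: "graph VH EH" and p: "path VH EH (xs @ [a, b] @ ys)" and "ys \<noteq> []"
  shows "path (VH - {b}) (contract_E EH a b) (xs @ a # ys)"
proof -
  let ?E = "\<lambda>x y. {x, y} \<in> EH" and ?C = "\<lambda>x y. {x, y} \<in> contract_E EH a b"
  have walk: "successively ?E (xs @ [a, b] @ ys)" and d: "distinct (xs @ [a, b] @ ys)"
    and V: "set (xs @ [a, b] @ ys) \<subseteq> VH"
    using p unfolding path_iff_successively by auto
  have "successively ?E (xs @ [a])" "successively ?E ys" "{b, hd ys} \<in> EH"
    using walk \<open>ys \<noteq> []\<close> by (auto simp: successively_append_iff successively_Cons)
  moreover have "b \<notin> set (xs @ [a])" "b \<notin> set ys" "hd ys \<noteq> a" "hd ys \<noteq> b"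
    using d \<open>ys \<noteq> []\<close> by (auto dest: hd_in_set)
  ultimately have "successively ?C (xs @ [a])" "successively ?C ys" "{hd ys, a} \<in> contract_E EH a b"
    using contract_keeps_walk[OF g] contract_edge_move[OF g, of "hd ys" b a]
    by (blast, blast, simp add: insert_commute)
  hence "successively ?C ((xs @ [a]) @ ys)"
    using \<open>ys \<noteq> []\<close> by (simp add: successively_append_iff successively_Cons insert_commute)
  thus ?thesis using d V unfolding path_iff_successively by auto
qed

lemma contract_path:
  assumes g: "graph VH EH" and p: "path VH EH P" and ends: "hd P \<noteq> b" "last P \<noteq> b"
    and ab: "a \<noteq> b"
    and adj: "b \<in> set P \<Longrightarrow> \<exists>xs ys. P = xs @ [a, b] @ ys \<or> P = xs @ [b, a] @ ys"
  shows "path (VH - {b}) (contract_E EH a b) (removeAll b P)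
    \<and> hd (removeAll b P) = hd P \<and> last (removeAll b P) = last P"
proof (cases "b \<in> set P")
  case False thus ?thesis using contract_keeps_path[OF g p] by simp
next
  case True
  have d: "distinct P" using p unfolding path_def by blast
  obtain xs ys where "P = xs @ [a, b] @ ys \<or> P = xs @ [b, a] @ ys" using adj True by blast
  thus ?thesis
  proof
    assume P: "P = xs @ [a, b] @ ys"
    have "ys \<noteq> []" using P ends(2) by auto
    moreover have "removeAll b P = xs @ a # ys" using P d ab by auto
    moreover have "path (VH - {b}) (contract_E EH a b) (xs @ a # ys)"
      using contract_path_through[OF g, of xs a b ys] p P \<open>ys \<noteq> []\<close> by simp
    ultimately show ?thesis using P by (cases xs) auto
  next
    assume P: "P = xs @ [b, a] @ ys"
    have "xs \<noteq> []" using P ends(1) by auto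
    have "path VH EH (rev ys @ [a, b] @ rev xs)" using p P path_rev[of VH EH P] by simp
    hence "path (VH - {b}) (contract_E EH a b) (rev ys @ a # rev xs)"
      using contract_path_through[OF g] \<open>xs \<noteq> []\<close> by simp
    hence "path (VH - {b}) (contract_E EH a b) (xs @ a # ys)"
      using path_rev[of _ _ "xs @ a # ys"] by simp
    moreover have "removeAll b P = xs @ a # ys" using P d ab by auto
    ultimately show ?thesis using P \<open>xs \<noteq> []\<close> by (cases ys rule: rev_cases) auto
  qed
qed

lemma contract_routing:
  assumes g: "graph VH EH" and R: "routing VH EH S T k R"
    and b: "b \<notin> S" "b \<notin> T" and adj: "dir_edge R a b \<or> dir_edge R b a"
  shows "routing (VH - {b}) (contract_E EH a b) S T k (removeAll b ` R)"
proof -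
  have ab: "a \<noteq> b" using adj dir_edge_edge[OF R] by blast
  have contracted: "path (VH - {b}) (contract_E EH a b) (removeAll b P)
      \<and> hd (removeAll b P) = hd P \<and> last (removeAll b P) = last P" if P: "P \<in> R" for P
  proof (rule contract_path[OF g routing_path[OF R P] _ _ ab])
    show "hd P \<noteq> b" "last P \<noteq> b" using routing_ends[OF R P] b by auto
  next
    assume "b \<in> set P"
    obtain Q i where Q: "Q \<in> R" "Suc i < length Q"
      "(Q ! i = a \<and> Q ! Suc i = b) \<or> (Q ! i = b \<and> Q ! Suc i = a)"
      using adj unfolding dir_edge_def by blast
    have "Q = P"
      using routing_position_unique[OF R Q(1) P] Q \<open>b \<in> set P\<close> by (metis Suc_lessD in_set_conv_nth)
    moreover have "Q = take i Q @ [Q ! i, Q ! Suc i] @ drop (Suc (Suc i)) Q"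
      using Q(2) by (simp add: Cons_nth_drop_Suc)
    ultimately show "\<exists>xs ys. P = xs @ [a, b] @ ys \<or> P = xs @ [b, a] @ ys" using Q(3) by metis
  qed
  have "inj_on (removeAll b) R"
  proof (rule inj_onI)
    fix P Q assume PQ: "P \<in> R" "Q \<in> R" "removeAll b P = removeAll b Q"
    hence "hd P = hd Q" using contracted by metis
    thus "P = Q"
      using routing_position_unique[OF R PQ(1,2), of 0 0] routing_nonempty[OF R] PQ
      by (simp add: hd_conv_nth)
  qed
  thus ?thesis
    using R contracted unfolding routing_def by (fastforce simp: card_image)
qed

lemma connected_union:
  assumes X: "connected_set V E X" and Y: "connected_set V E Y" and d: "X \<inter> Y = {}"
    and x0: "x0 \<in> X" and y0: "y0 \<in> Y" and e: "{x0, y0} \<in> E"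
  shows "connected_set V E (X \<union> Y)"
proof -
  have cross: "\<exists>P. path V E P \<and> set P \<subseteq> X \<union> Y \<and> hd P = x \<and> last P = y"
    if "x \<in> X" "y \<in> Y" for x y
  proof -
    obtain P where P: "path V E P" "set P \<subseteq> X" "hd P = x" "last P = x0"
      using X \<open>x \<in> X\<close> x0 unfolding connected_set_def by blast
    obtain Q where Q: "path V E Q" "set Q \<subseteq> Y" "hd Q = y0" "last Q = y"
      using Y \<open>y \<in> Y\<close> y0 unfolding connected_set_def by blast
    have "P \<noteq> []" "Q \<noteq> []" using P(1) Q(1) unfolding path_def walk_def by blast+
    have "path V E (P @ Q)" using path_append[OF P(1) Q(1)] P Q d e by auto
    thus ?thesis using P Q \<open>P \<noteq> []\<close> \<open>Q \<noteq> []\<close> by (intro exI[of _ "P @ Q"]) auto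
  qed
  show ?thesis unfolding connected_set_def
  proof (intro ballI)
    fix x y assume "x \<in> X \<union> Y" "y \<in> X \<union> Y"
    moreover have "\<exists>P. path V E P \<and> set P \<subseteq> X \<union> Y \<and> hd P = x \<and> last P = y"
      if yx: "y \<in> X" "x \<in> Y"
    proof -
      obtain P where "path V E P" "set P \<subseteq> X \<union> Y" "hd P = y" "last P = x" using cross yx by blast
      moreover have "P \<noteq> []" using \<open>path V E P\<close> unfolding path_def walk_def by blast
      ultimately show ?thesis using path_rev
        by (intro exI[of _ "rev P"]) (auto simp: hd_rev last_rev)
    qed
    ultimately show "\<exists>P. path V E P \<and> set P \<subseteq> X \<union> Y \<and> hd P = x \<and> last P = y"
      using X Y cross unfolding connected_set_def by blast
  qed
qed

lemma contract_graph:
  assumes g: "graph VH EH" and e: "{a, b} \<in> EH"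
  shows "graph (VH - {b}) (contract_E EH a b)"
proof -
  have ab: "a \<noteq> b" "a \<in> VH" using g e unfolding graph_def by auto
  have "finite (VH - {b})" using g unfolding graph_def by auto
  moreover have "\<forall>e'\<in>contract_E EH a b. card e' = 2 \<and> e' \<subseteq> VH - {b}"
  proof
    fix e' assume "e' \<in> contract_E EH a b"
    then obtain e where "e \<in> EH" "e' = (\<lambda>x. if x = b then a else x) ` e" "card e' = 2"
      unfolding contract_E_def by blast
    moreover have "e \<subseteq> VH" using g \<open>e \<in> EH\<close> unfolding graph_def by auto
    ultimately show "card e' = 2 \<and> e' \<subseteq> VH - {b}" using ab by auto
  qed
  ultimately show ?thesis unfolding graph_def by blast
qed

text \<open>Merging the branch set of b into that of a gives a minor model of the contracted graph,
  since the two branch sets are joined by an edge of G.\<close>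
lemma contract_minor_model:
  assumes g: "graph VH EH" and mm: "minor_model VG EG VH EH \<beta>" and e: "{a, b} \<in> EH"
  shows "minor_model VG EG (VH - {b}) (contract_E EH a b) (contract_branch \<beta> a b)"
  unfolding minor_model_def
proof (intro conjI)
  let ?f = "\<lambda>x. if x = b then a else x" and ?\<beta> = "contract_branch \<beta> a b"
  have ab: "a \<noteq> b" "a \<in> VH" "b \<in> VH" using g e unfolding graph_def by auto
  have disj: "u \<in> VH \<Longrightarrow> v \<in> VH \<Longrightarrow> u \<noteq> v \<Longrightarrow> \<beta> u \<inter> \<beta> v = {}" for u v
    using mm unfolding minor_model_def by blast
  show "\<forall>v\<in>VH - {b}. ?\<beta> v \<noteq> {} \<and> ?\<beta> v \<subseteq> VG \<and> connected_set VG EG (?\<beta> v)"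
  proof
    fix v assume v: "v \<in> VH - {b}"
    show "?\<beta> v \<noteq> {} \<and> ?\<beta> v \<subseteq> VG \<and> connected_set VG EG (?\<beta> v)"
    proof (cases "v = a")
      case False thus ?thesis using mm v unfolding minor_model_def contract_branch_def by auto
    next
      case True
      obtain x y where xy: "x \<in> \<beta> a" "y \<in> \<beta> b" "{x, y} \<in> EG"
        using mm e unfolding minor_model_def by blast
      have "connected_set VG EG (\<beta> a \<union> \<beta> b)"
        by (rule connected_union[OF _ _ _ xy]) (use mm ab disj in \<open>auto simp: minor_model_def\<close>)
      thus ?thesis using True mm ab unfolding minor_model_def contract_branch_def by auto
    qed
  qed
  show "\<forall>u\<in>VH - {b}. \<forall>v\<in>VH - {b}. u \<noteq> v \<longrightarrow> ?\<beta> u \<inter> ?\<beta> v = {}"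
    using disj ab unfolding contract_branch_def by auto
  show "\<forall>u v. {u, v} \<in> contract_E EH a b \<longrightarrow> (\<exists>x\<in>?\<beta> u. \<exists>y\<in>?\<beta> v. {x, y} \<in> EG)"
  proof (intro allI impI)
    fix u v assume "{u, v} \<in> contract_E EH a b"
    then obtain e where e: "e \<in> EH" "{u, v} = ?f ` e" unfolding contract_E_def by blast
    obtain c d where cd: "e = {c, d}" using g e(1) unfolding graph_def by (meson card_2_iff)
    obtain x y where xy: "x \<in> \<beta> c" "y \<in> \<beta> d" "{x, y} \<in> EG"
      using mm e(1) cd unfolding minor_model_def by blast
    have "x \<in> ?\<beta> (?f c)" "y \<in> ?\<beta> (?f d)" using xy unfolding contract_branch_def by auto
    moreover have "{u, v} = {?f c, ?f d}" using e(2) cd by simp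
    hence "(u = ?f c \<and> v = ?f d) \<or> (u = ?f d \<and> v = ?f c)" by (simp only: doubleton_eq_iff)
    moreover have "{y, x} \<in> EG" using xy(3) by (simp add: insert_commute)
    ultimately show "\<exists>x\<in>?\<beta> u. \<exists>y\<in>?\<beta> v. {x, y} \<in> EG"
      using xy(3) by blast
  qed
qed

lemma contract_good_minor:
  assumes gm: "good_minor VG EG S1 T1 S2 T2 k VH EH \<beta>" and e: "{a, b} \<in> EH"
    and a: "a \<notin> S1 \<union> T1 \<union> S2 \<union> T2" and b: "b \<notin> S1 \<union> T1 \<union> S2 \<union> T2"
    and r1: "routable (VH - {b}) (contract_E EH a b) S1 T1 k"
    and r2: "routable (VH - {b}) (contract_E EH a b) S2 T2 k"
  shows "good_minor VG EG S1 T1 S2 T2 k (contract_V VH a b) (contract_E EH a b) (contract_branch \<beta> a b)"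
proof -
  have g: "graph VH EH" and mm: "minor_model VG EG VH EH \<beta>"
    and terminals: "\<forall>t \<in> S1 \<union> T1 \<union> S2 \<union> T2. t \<in> VH \<and> \<beta> t = {t}"
    using gm unfolding good_minor_def by auto
  have "\<forall>t \<in> S1 \<union> T1 \<union> S2 \<union> T2. t \<in> VH - {b} \<and> contract_branch \<beta> a b t = {t}"
    using terminals a b unfolding contract_branch_def by auto
  thus ?thesis
    unfolding good_minor_def contract_V_def
    using contract_graph[OF g e] contract_minor_model[OF g mm e] r1 r2 by blast
qed

section \<open>Alternating cycles of length two\<close>

text \<open>Terminals have degree 1 in G and singleton branch sets, so in H each terminal has at
  most one neighbour.\<close>
lemma terminal_unique_neighbour:
  assumes G: "graph VG EG" and gm: "good_minor VG EG S1 T1 S2 T2 k VH EH \<beta>"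
    and deg: "\<forall>v \<in> S1 \<union> T1 \<union> S2 \<union> T2. degree EG v = 1"
    and t: "t \<in> S1 \<union> T1 \<union> S2 \<union> T2" and p: "{t, p} \<in> EH" and q: "{t, q} \<in> EH"
  shows "p = q"
proof (rule ccontr)
  assume "p \<noteq> q"
  have g: "graph VH EH" and mm: "minor_model VG EG VH EH \<beta>" and bt: "\<beta> t = {t}"
    using gm t unfolding good_minor_def by auto
  have "p \<in> VH" "q \<in> VH" using g p q unfolding graph_def by auto
  hence disj: "\<beta> p \<inter> \<beta> q = {}" using mm \<open>p \<noteq> q\<close> unfolding minor_model_def by blast
  have neighbour: "\<exists>x\<in>\<beta> u. {t, x} \<in> EG \<and> x \<noteq> t" if u: "{t, u} \<in> EH" for u
  proof -
    obtain t' x where "t' \<in> \<beta> t" "x \<in> \<beta> u" "{t', x} \<in> EG"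
      using mm u unfolding minor_model_def by blast
    moreover have "card {t, x} = 2" using G \<open>{t', x} \<in> EG\<close> bt \<open>t' \<in> \<beta> t\<close> unfolding graph_def by auto
    ultimately show ?thesis using bt by (cases "x = t") auto
  qed
  obtain x z where "{t, x} \<in> EG" "{t, z} \<in> EG" "x \<noteq> z" "x \<noteq> t"
    using neighbour[OF p] neighbour[OF q] disj by blast
  hence "card {{t, x}, {t, z}} = 2" "{{t, x}, {t, z}} \<subseteq> {e\<in>EG. t \<in> e}"
    by (auto simp: doubleton_eq_iff)
  moreover have "finite {e\<in>EG. t \<in> e}"
  proof -
    have "EG \<subseteq> Pow VG" "finite VG" using G unfolding graph_def by auto
    thus ?thesis using finite_subset by fastforce
  qed
  ultimately have "2 \<le> degree EG t" unfolding degree_def using card_mono by metis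
  thus False using deg t by auto
qed

text \<open>The two vertices of a red edge a b that is also traversed backwards by a blue path are
  not terminals: each of the four possibilities forces a terminal either to have a second
  neighbour or to violate the direction of its routing.\<close>
lemma two_cycle_not_terminal:
  assumes unique: "\<And>t p q. t \<in> S1 \<union> T1 \<union> S2 \<union> T2 \<Longrightarrow> {t, p} \<in> EH \<Longrightarrow> {t, q} \<in> EH \<Longrightarrow> p = q"
    and R: "routing VH EH S1 T1 k R" and B: "routing VH EH S2 T2 k B"
    and sinks: "finite T1" "card T1 = k" and sources: "finite S2" "card S2 = k"
    and disjoint: "S1 \<inter> T2 = {}"
    and ab: "dir_edge R a b" and ba: "dir_edge B b a"
  shows "a \<notin> S1 \<union> T1 \<union> S2 \<union> T2"
proof
  assume a: "a \<in> S1 \<union> T1 \<union> S2 \<union> T2"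
  have "{a, b} \<in> EH" using dir_edge_edge[OF R ab] by blast
  consider "a \<in> S1" | "a \<in> T2" | "a \<in> T1 \<or> a \<in> S2" using a by blast
  thus False
  proof cases
    case 1
    then obtain z where z: "dir_edge B a z" using inner_succ[OF B ba] disjoint by blast
    have "z \<noteq> b" using dir_edge_antisym[OF B ba] z by blast
    thus False using unique[OF a \<open>{a, b} \<in> EH\<close>] dir_edge_edge[OF B z] by blast
  next
    case 2
    then obtain z where z: "dir_edge R z a" using inner_pred[OF R ab] disjoint by blast
    have "z \<noteq> b" using dir_edge_antisym[OF R ab] z by blast
    thus False using unique[OF a \<open>{a, b} \<in> EH\<close>] dir_edge_edge[OF R z] by (auto simp: insert_commute)
  next
    case 3
    thus False using sink_no_succ[OF R sinks _ ab] source_no_pred[OF B sources _ ba] by blast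
  qed
qed

text \<open>A minimal minor admits no alternating cycle of length two: its edge could be contracted.\<close>
lemma two_cycle_impossible:
  assumes G: "graph VG EG" and deg: "\<forall>v \<in> S1 \<union> T1 \<union> S2 \<union> T2. degree EG v = 1"
    and disjoint: "S1 \<inter> T2 = {}" "T1 \<inter> S2 = {}"
    and S1: "finite S1" "card S1 = k" and T1: "finite T1" "card T1 = k"
    and S2: "finite S2" "card S2 = k" and T2: "finite T2" "card T2 = k"
    and mm: "minimal_minor VG EG S1 T1 S2 T2 k VH EH \<beta>"
    and R: "routing VH EH S1 T1 k R" and B: "routing VH EH S2 T2 k B"
    and ab: "dir_edge R a b" and ba: "dir_edge B b a"
  shows False
proof -
  have gm: "good_minor VG EG S1 T1 S2 T2 k VH EH \<beta>" using mm unfolding minimal_minor_def by blast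
  have g: "graph VH EH" using gm unfolding good_minor_def by blast
  note unique = terminal_unique_neighbour[OF G gm deg]
  have a: "a \<notin> S1 \<union> T1 \<union> S2 \<union> T2"
    by (rule two_cycle_not_terminal[OF _ R B T1 S2 disjoint(1) ab ba]) (use unique in blast)
  have "b \<notin> S2 \<union> T2 \<union> S1 \<union> T1"
    by (rule two_cycle_not_terminal[OF _ B R T2 S1 _ ba ab]) (use unique disjoint(2) in blast)+
  hence b: "b \<notin> S1 \<union> T1 \<union> S2 \<union> T2" by blast
  have "{a, b} \<in> EH" using dir_edge_edge[OF R ab] by blast
  moreover have "routable (VH - {b}) (contract_E EH a b) S1 T1 k"
    using contract_routing[OF g R _ _ disjI1[OF ab]] b unfolding routable_def by blast
  moreover have "routable (VH - {b}) (contract_E EH a b) S2 T2 k"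
    using contract_routing[OF g B _ _ disjI2[OF ba]] b unfolding routable_def by blast
  ultimately show False
    using contract_good_minor[OF gm _ a b] mm unfolding minimal_minor_def by blast
qed

lemma alternating_cycle_impossible:
  assumes G: "graph VG EG" and deg: "\<forall>v \<in> S1 \<union> T1 \<union> S2 \<union> T2. degree EG v = 1"
    and disjoint: "S1 \<inter> T1 = {}" "S1 \<inter> T2 = {}" "T1 \<inter> S2 = {}"
    and S1: "finite S1" "card S1 = k" and T1: "finite T1" "card T1 = k"
    and S2: "finite S2" "card S2 = k" and T2: "finite T2" "card T2 = k"
    and mm: "minimal_minor VG EG S1 T1 S2 T2 k VH EH \<beta>"
    and R: "routing VH EH S1 T1 k R" and B: "routing VH EH S2 T2 k B"
    and cycle: "alternating_cycle R B L y"
  shows False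
proof (cases "L = 2")
  case True
  hence "dir_edge R (y 0) (y 1)" "dir_edge B (y 1) (y 0)"
    using cycle unfolding alternating_cycle_def by (auto simp: numeral_2_eq_2)
  thus False using two_cycle_impossible[OF G deg disjoint(2,3) S1 T1 S2 T2 mm R B] by blast
next
  case False
  hence "3 \<le> L" using cycle unfolding alternating_cycle_def by simp
  thus False using long_alternating_cycle_impossible[OF mm R B S1 T1 disjoint(1) cycle] by blast
qed

text \<open>Minimality is symmetric in the two terminal pairs, which allows exchanging the roles
  of red and blue.\<close>
lemma minimal_minor_swap:
  assumes "minimal_minor VG EG S1 T1 S2 T2 k VH EH \<beta>"
  shows "minimal_minor VG EG S2 T2 S1 T1 k VH EH \<beta>"
proof -
  have "S1 \<union> T1 \<union> S2 \<union> T2 = S2 \<union> T2 \<union> S1 \<union> T1" by blast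
  hence "good_minor VG EG S1 T1 S2 T2 k V E \<gamma> \<longleftrightarrow> good_minor VG EG S2 T2 S1 T1 k V E \<gamma>"
    for V E \<gamma> unfolding good_minor_def by auto
  thus ?thesis using assms unfolding minimal_minor_def by simp
qed

text \<open>A repeated vertex on a chain closes an alternating cycle: take two occurrences at
  minimal distance; the walk between them starts with a red or with a blue edge.\<close>
lemma chain_repetition_cycle:
  assumes R: "routing V E S1 T1 k R" and B: "routing V E S2 T2 k B"
    and chain: "chain R B c xs" and repeated: "\<not> distinct xs"
  shows "\<exists>L y. alternating_cycle R B L y \<or> alternating_cycle B R L y"
proof -
  let ?rep = "\<lambda>d. \<exists>i. 0 < d \<and> i + d < length xs \<and> xs ! i = xs ! (i + d)"
  have "\<exists>d. ?rep d"
  proof -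
    obtain a b where "a < b" "b < length xs" "xs ! a = xs ! b"
      using repeated unfolding distinct_conv_nth by (metis linorder_neqE_nat)
    thus ?thesis by (intro exI[of _ "b - a"] exI[of _ a]) auto
  qed
  define D where "D = (LEAST d. ?rep d)"
  obtain i where i: "0 < D" "i + D < length xs" "xs ! i = xs ! (i + D)"
    using LeastI_ex[OF \<open>\<exists>d. ?rep d\<close>] unfolding D_def[symmetric] by blast
  have minimal: "\<not> ?rep d" if "d < D" for d using that unfolding D_def by (rule not_less_Least)
  define y where "y n = xs ! (i + n)" for n
  have "inj_on y {..<D}"
  proof (rule inj_onI, rule ccontr)
    fix a b assume ab: "a \<in> {..<D}" "b \<in> {..<D}" "y a = y b" "a \<noteq> b"
    have "?rep (b - a)" if "a < b" "a \<in> {..<D}" "b \<in> {..<D}" "y a = y b" for a b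
      using that i by (intro exI[of _ "i + a"]) (auto simp: y_def)
    moreover have "b - a < D" "a - b < D" using ab by auto
    ultimately show False using minimal ab by (metis linorder_neqE_nat)
  qed
  moreover have "y D = y 0" using i unfolding y_def by simp
  moreover have step: "if (even (i + t) \<longleftrightarrow> c) then dir_edge R (y t) (y (Suc t))
      else dir_edge B (y t) (y (Suc t))" if "t < D" for t
    using chain that i unfolding chain_def y_def by simp
  moreover have "(even (i + t) \<longleftrightarrow> c) \<longleftrightarrow> (even t \<longleftrightarrow> (even i \<longleftrightarrow> c))" for t
    by (cases c; cases "even i"; cases "even t") auto
  moreover have "D \<noteq> 1"
  proof
    assume "D = 1"
    hence "dir_edge R (y 0) (y 0) \<or> dir_edge B (y 0) (y 0)"
      using step[of 0] \<open>y D = y 0\<close> by (auto split: if_splits)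
    thus False using dir_edge_edge[OF R] dir_edge_edge[OF B] by blast
  qed
  ultimately have "2 \<le> D \<and> y D = y 0 \<and> inj_on y {..<D} \<and>
      (\<forall>t<D. if even t \<longleftrightarrow> (even i \<longleftrightarrow> c) then dir_edge R (y t) (y (Suc t))
        else dir_edge B (y t) (y (Suc t)))"
    using i(1) by (auto simp del: even_add)
  hence "alternating_cycle R B D y \<or> alternating_cycle B R D y"
    unfolding alternating_cycle_def by (cases "even i \<longleftrightarrow> c") auto
  thus ?thesis by blast
qed

theorem claim2p4:
  fixes VG :: "'a set" and EG :: "'a set set" and S1 T1 S2 T2 :: "'a set" and k :: nat
    and VH :: "'a set" and EH :: "'a set set" and \<beta> :: "'a \<Rightarrow> 'a set"
    and R B :: "'a list set" and c :: bool and xs :: "'a list"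
  assumes "graph VG EG"
    and "S1 \<subseteq> VG" "T1 \<subseteq> VG" "S2 \<subseteq> VG" "T2 \<subseteq> VG"
    and "card S1 = k" "card T1 = k" "card S2 = k" "card T2 = k"
    and "S1 \<inter> T1 = {}" "S1 \<inter> S2 = {}" "S1 \<inter> T2 = {}"
        "T1 \<inter> S2 = {}" "T1 \<inter> T2 = {}" "S2 \<inter> T2 = {}"
    and "\<forall>v \<in> S1 \<union> T1 \<union> S2 \<union> T2. degree EG v = 1"
    and "routable VG EG S1 T1 k" "routable VG EG S2 T2 k"
    and "minimal_minor VG EG S1 T1 S2 T2 k VH EH \<beta>"
    and "routing VH EH S1 T1 k R"
    and "routing VH EH S2 T2 k B"
    and "chain R B c xs"
  shows "distinct xs"
proof (rule ccontr)
  assume "\<not> distinct xs"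
  note G = assms(1) and deg = assms(16) and mm = assms(19) and R = assms(20) and B = assms(21)
  have "finite VG" using G unfolding graph_def by blast
  hence S1: "finite S1" "card S1 = k" and T1: "finite T1" "card T1 = k"
    and S2: "finite S2" "card S2 = k" and T2: "finite T2" "card T2 = k"
    using finite_subset assms(2-9) by metis+
  obtain L y where "alternating_cycle R B L y \<or> alternating_cycle B R L y"
    using chain_repetition_cycle[OF R B assms(22) \<open>\<not> distinct xs\<close>] by blast
  thus False
  proof
    assume "alternating_cycle R B L y"
    thus False using alternating_cycle_impossible[OF G deg assms(10,12,13) S1 T1 S2 T2 mm R B] by blast
  next
    assume "alternating_cycle B R L y"
    moreover have "\<forall>v \<in> S2 \<union> T2 \<union> S1 \<union> T1. degree EG v = 1" using deg by blast
    moreover have "S2 \<inter> T1 = {}" "T2 \<inter> S1 = {}" using assms(12,13) by blast+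
    ultimately show False
      using alternating_cycle_impossible[OF G _ assms(15) _ _ S2 T2 S1 T1 minimal_minor_swap[OF mm] B R]
      by blast
  qed
qed


end
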